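(* Let $$k_u=\frac{1}{2\pi}\Big(1+\sqrt2\sum_{m=1}^{\infty}\frac{\beta_m}{\sinh\beta_m}\Big).$$ Then $k_u<\infty$, and the PZD conditional density satisfies the following bounds. (1) For all $r>0$, $r_0\ge0$ and $\phi,\phi_0\in[0,2\pi)$: $$p(r,\phi\mid r_0,\phi_0)<k_u\,p_{R|R_0}(r\mid r_0).$$ Moreover, for all $r,r_0\ge0$: $$p_{R|R_0}(r\mid r_0)\le\frac{2r}{\sigma^2\mathcal L}e^{-\frac{(r-r_0)^2}{\sigma^2\mathcal L}}\le\frac{2r}{\sigma^2\mathcal L}.$$ (2) For all $r,r_0\ge0$ and $\phi,\phi_0$: $$p(r,\phi\mid r_0,\phi_0)\ge\frac{1}{2\pi}\,p_{R|R_0}(r\mid r_0)\,(1-\xi(r_0)),$$ where $$\xi(r_0)=\sqrt2\,e^{-\left(\Re(a_1)-\frac{1}{\sigma^2\mathcal L}\right)r_0^2}\sum_{m=1}^\infty\frac{\beta_m}{\sinh\beta_m}.$$ Furthermore, $\xi(r_0)\to0$ as $r_0\to\infty$.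
   Context: Fix constants $\gamma>0$, $\sigma>0$, $\mathcal L>0$, and let $j=\sqrt{-1}$. For $m\in\mathbb N$ let $\beta_m=\sqrt{m\gamma/2}\,\sigma\mathcal L$ and $$a_m=\frac{\sqrt{jm\gamma}}{\sigma}\coth\!\big(\sqrt{jm\gamma\sigma^2}\,\mathcal L\big),\qquad b_m=\frac{\sqrt{jm\gamma}}{\sigma}\,\frac{1}{\sinh\!\big(\sqrt{jm\gamma\sigma^2}\,\mathcal L\big)},$$ with principal square roots. $I_m$ denotes the modified Bessel function of the first kind of order $m$. The PZD channel conditional density (input polar coordinates $(r_0,\phi_0)$, output polar coordinates $(r,\phi)$) is $$p(r,\phi\mid r_0,\phi_0)=\frac{1}{2\pi}p_{R|R_0}(r\mid r_0)+\frac1\pi\sum_{m\ge1}\Re\!\Big(C_m(r,r_0)\,e^{jm(\phi-\phi_0-\gamma r_0^2\mathcal L)}\Big),$$ where $$p_{R|R_0}(r\mid r_0)=\frac{2r}{\sigma^2\mathcal L}e^{-\frac{r^2+r_0^2}{\sigma^2\mathcal L}}I_0\!\Big(\frac{2rr_0}{\sigma^2\mathcal L}\Big),\qquad C_m(r,r_0)=r\,b_m\,e^{-a_m(r^2+r_0^2)}I_m(2b_m r_0 r).$$ *)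

theory Defs
  imports "HOL-Analysis.Analysis"
begin

definition besselI :: "nat \<Rightarrow> complex \<Rightarrow> complex" where
  "besselI m z = (\<Sum>k. (z / 2) ^ (2 * k + m) / of_nat (fact k * fact (k + m)))"

definition ccoth :: "complex \<Rightarrow> complex" where
  "ccoth z = cosh z / sinh z"

definition pzd_beta :: "real \<Rightarrow> real \<Rightarrow> real \<Rightarrow> nat \<Rightarrow> real" where
  "pzd_beta \<gamma> \<sigma> L m = sqrt (real m * \<gamma> / 2) * \<sigma> * L"

definition pzd_a :: "real \<Rightarrow> real \<Rightarrow> real \<Rightarrow> nat \<Rightarrow> complex" where
  "pzd_a \<gamma> \<sigma> L m =
     csqrt (\<i> * of_nat m * of_real \<gamma>) / of_real \<sigma>
     * ccoth (csqrt (\<i> * of_nat m * of_real (\<gamma> * \<sigma>\<^sup>2)) * of_real L)"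

definition pzd_b :: "real \<Rightarrow> real \<Rightarrow> real \<Rightarrow> nat \<Rightarrow> complex" where
  "pzd_b \<gamma> \<sigma> L m =
     csqrt (\<i> * of_nat m * of_real \<gamma>) / of_real \<sigma>
     / sinh (csqrt (\<i> * of_nat m * of_real (\<gamma> * \<sigma>\<^sup>2)) * of_real L)"

definition pzd_pR :: "real \<Rightarrow> real \<Rightarrow> real \<Rightarrow> real \<Rightarrow> real" where
  "pzd_pR \<sigma> L r r0 =
     2 * r / (\<sigma>\<^sup>2 * L) * exp (- (r\<^sup>2 + r0\<^sup>2) / (\<sigma>\<^sup>2 * L))
     * Re (besselI 0 (of_real (2 * r * r0 / (\<sigma>\<^sup>2 * L))))"

definition pzd_C :: "real \<Rightarrow> real \<Rightarrow> real \<Rightarrow> nat \<Rightarrow> real \<Rightarrow> real \<Rightarrow> complex" where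
  "pzd_C \<gamma> \<sigma> L m r r0 =
     of_real r * pzd_b \<gamma> \<sigma> L m * exp (- pzd_a \<gamma> \<sigma> L m * of_real (r\<^sup>2 + r0\<^sup>2))
     * besselI m (2 * pzd_b \<gamma> \<sigma> L m * of_real (r0 * r))"

text \<open>PZD conditional density p(r, phi | r0, phi0); the sum runs over m = Suc n \<ge> 1.\<close>
definition pzd_p :: "real \<Rightarrow> real \<Rightarrow> real \<Rightarrow> real \<Rightarrow> real \<Rightarrow> real \<Rightarrow> real \<Rightarrow> real" where
  "pzd_p \<gamma> \<sigma> L r \<phi> r0 \<phi>0 =
     1 / (2 * pi) * pzd_pR \<sigma> L r r0
     + 1 / pi * (\<Sum>n. Re (pzd_C \<gamma> \<sigma> L (Suc n) r r0
          * exp (\<i> * of_nat (Suc n) * of_real (\<phi> - \<phi>0 - \<gamma> * r0\<^sup>2 * L))))"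

definition pzd_ku :: "real \<Rightarrow> real \<Rightarrow> real \<Rightarrow> real" where
  "pzd_ku \<gamma> \<sigma> L =
     1 / (2 * pi) * (1 + sqrt 2 * (\<Sum>n. pzd_beta \<gamma> \<sigma> L (Suc n) / sinh (pzd_beta \<gamma> \<sigma> L (Suc n))))"

definition pzd_xi :: "real \<Rightarrow> real \<Rightarrow> real \<Rightarrow> real \<Rightarrow> real" where
  "pzd_xi \<gamma> \<sigma> L r0 =
     sqrt 2 * exp (- (Re (pzd_a \<gamma> \<sigma> L 1) - 1 / (\<sigma>\<^sup>2 * L)) * r0\<^sup>2)
     * (\<Sum>n. pzd_beta \<gamma> \<sigma> L (Suc n) / sinh (pzd_beta \<gamma> \<sigma> L (Suc n)))"

end

theory Submission
  imports Defs "HOL-Real_Asymp.Real_Asymp"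
begin

(*
  Write w = \<beta>\<^sub>m (1 + \<i>), so that \<sigma>\<^sup>2 L a\<^sub>m = w coth w and \<sigma>\<^sup>2 L b\<^sub>m = w / sinh w.
  Since |sinh w|\<^sup>2 = sinh\<^sup>2 \<beta>\<^sub>m + sin\<^sup>2 \<beta>\<^sub>m exceeds both sinh\<^sup>2 \<beta>\<^sub>m and 2 \<beta>\<^sub>m\<^sup>2,
  we get \<sigma>\<^sup>2 L |b\<^sub>m| \<le> min 1 (\<surd>2 \<beta>\<^sub>m / sinh \<beta>\<^sub>m). The real part Re (w coth w) is half of
  x B'(x) / B(x) at x = 2 \<beta>\<^sub>m, where B = cosh - cos has nonnegative Taylor coefficients;
  hence it increases with m and exceeds 1. Together with |I\<^sub>m(z)| \<le> I\<^sub>0(|z|) and the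
  monotonicity of I\<^sub>0 this bounds every harmonic,
    |C\<^sub>m| \<le> (\<surd>2 / 2) (\<beta>\<^sub>m / sinh \<beta>\<^sub>m) exp (- (Re a\<^sub>1 - 1 / (\<sigma>\<^sup>2 L)) (r\<^sup>2 + r\<^sub>0\<^sup>2)) p\<^sub>R\<^sub>|\<^sub>R\<^sub>0(r | r\<^sub>0),
  and summing over m gives both bounds. The series \<Sum> \<beta>\<^sub>m / sinh \<beta>\<^sub>m converges because
  sinh \<beta> \<ge> \<beta>\<^sup>5 / 120 and \<beta>\<^sub>m\<^sup>4 grows like m\<^sup>2.
*)

section \<open>Elementary inequalities for hyperbolic and circular functions\<close>

lemma DERIV_pos_imp_pos:
  fixes g g' :: "real \<Rightarrow> real"
  assumes "g 0 = 0" "\<And>x. (g has_real_derivative g' x) (at x)" "\<And>x. x > 0 \<Longrightarrow> g' x > 0" "x > 0"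
  shows "g x > 0"
proof -
  have "g 0 < g x"
  proof (rule DERIV_pos_imp_increasing_open[OF \<open>x > 0\<close>])
    show "\<And>y. 0 < y \<Longrightarrow> y < x \<Longrightarrow> \<exists>z. (g has_real_derivative z) (at y) \<and> 0 < z"
      using assms by blast
    show "continuous_on {0..x} g"
      using assms(2) by (meson DERIV_continuous continuous_at_imp_continuous_on)
  qed
  with assms show ?thesis by simp
qed

lemma one_lt_cosh:
  assumes "x \<noteq> 0" shows "1 < cosh (x::real)"
  using cosh_real_ge_1[of x] cosh_real_one_iff[of x] assms by linarith

lemma sin_lt_sinh:
  assumes "x > 0" shows "sin x < sinh (x::real)"
proof -
  have "0 < sinh x - x"
    by (rule DERIV_pos_imp_pos[of "\<lambda>x. sinh x - x" "\<lambda>x. cosh x - 1"])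
       (use assms one_lt_cosh in \<open>auto intro!: derivative_eq_intros\<close>)
  thus ?thesis using sin_x_le_x[of x] assms by linarith
qed

lemma cosh_plus_cos_gt_2:
  assumes "x > 0" shows "2 < cosh (x::real) + cos x"
proof -
  have "0 < cosh x + cos x - 2"
    by (rule DERIV_pos_imp_pos[of "\<lambda>x. cosh x + cos x - 2" "\<lambda>x. sinh x - sin x"])
       (use assms in \<open>auto intro!: derivative_eq_intros simp: sin_lt_sinh\<close>)
  thus ?thesis by simp
qed

lemma sinh_plus_sin_gt:
  assumes "x > 0" shows "2 * x < sinh (x::real) + sin x"
proof -
  have "0 < sinh x + sin x - 2 * x"
    by (rule DERIV_pos_imp_pos[of "\<lambda>x. sinh x + sin x - 2 * x" "\<lambda>x. cosh x + cos x - 2"])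
       (use assms cosh_plus_cos_gt_2 in \<open>auto intro!: derivative_eq_intros\<close>)
  thus ?thesis by simp
qed

lemma cosh_minus_cos_gt_square:
  assumes "x > 0" shows "x\<^sup>2 < cosh (x::real) - cos x"
proof -
  have "0 < cosh x - cos x - x\<^sup>2"
    by (rule DERIV_pos_imp_pos[of "\<lambda>x. cosh x - cos x - x\<^sup>2" "\<lambda>x. sinh x + sin x - 2 * x"])
       (use assms sinh_plus_sin_gt in \<open>auto intro!: derivative_eq_intros\<close>)
  thus ?thesis by simp
qed

lemma sinh_plus_sin_lt:
  assumes "x > 0" shows "sinh x + sin x < x * (cosh (x::real) + cos x)"
proof -
  have "0 < x * (cosh x + cos x) - sinh x - sin x"
    by (rule DERIV_pos_imp_pos[of "\<lambda>x. x * (cosh x + cos x) - sinh x - sin x"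
          "\<lambda>x. x * (sinh x - sin x)"])
       (use assms sin_lt_sinh in \<open>auto intro!: derivative_eq_intros simp: algebra_simps\<close>)
  thus ?thesis by simp
qed

lemma cosh_minus_cos_lt:
  assumes "x > 0" shows "2 * (cosh x - cos x) < x * (sinh (x::real) + sin x)"
proof -
  have "0 < x * (sinh x + sin x) - 2 * (cosh x - cos x)"
    by (rule DERIV_pos_imp_pos[of "\<lambda>x. x * (sinh x + sin x) - 2 * (cosh x - cos x)"
          "\<lambda>x. x * (cosh x + cos x) - sinh x - sin x"])
       (use assms sinh_plus_sin_lt in \<open>auto intro!: derivative_eq_intros simp: algebra_simps\<close>)
  thus ?thesis by simp
qed

lemma sinh_ge_pow5:
  assumes "x \<ge> 0" shows "x ^ 5 / 120 \<le> sinh (x::real)"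
proof -
  have sums: "(\<lambda>n. if even n then 0 else x ^ n /\<^sub>R fact n) sums sinh x"
    by (rule sinh_converges)
  have "(\<Sum>n\<in>{5}. if even n then 0 else x ^ n /\<^sub>R fact n) \<le> sinh x"
    unfolding sums_unique[OF sums]
    by (rule sum_le_suminf[OF sums_summable[OF sums]]) (use assms in auto)
  moreover have "fact 5 = (120::real)" by (simp add: fact_numeral)
  ultimately show ?thesis by simp
qed

section \<open>Monotonicity of \<open>x B'(x) / B(x)\<close> for power series with nonnegative coefficients\<close>

lemma power_cross_difference_nonpos:
  fixes v1 v2 :: real and j k :: nat
  assumes "0 \<le> v1" "v1 \<le> v2"
  shows "(1 / real (k+1) - 1 / real (j+1)) * (v1^(j+1) * v2^(k+1) - v2^(j+1) * v1^(k+1)) \<le> 0"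
proof (cases "j \<le> k")
  case True
  then obtain d where k: "k = j + d" using le_Suc_ex by blast
  have "v1^d \<le> v2^d" using assms by (simp add: power_mono)
  hence "v2^(j+1) * v1^(k+1) \<le> v1^(j+1) * v2^(k+1)"
    using assms unfolding k by (simp add: power_add mult_left_mono mult.assoc mult.left_commute)
  moreover have "1 / real (k+1) - 1 / real (j+1) \<le> 0" using True by (simp add: frac_le)
  ultimately show ?thesis by (simp add: mult_nonpos_nonneg)
next
  case False
  then obtain d where j: "j = k + d" by (metis le_Suc_ex nle_le)
  have "v1^d * (v1^(k+1) * v2^(k+1)) \<le> v2^d * (v1^(k+1) * v2^(k+1))"
    using assms by (intro mult_right_mono power_mono) auto
  hence "v1^(j+1) * v2^(k+1) \<le> v2^(j+1) * v1^(k+1)"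
    unfolding j by (simp add: power_add algebra_simps)
  moreover have "1 / real (k+1) - 1 / real (j+1) \<ge> 0" using False by (simp add: frac_le)
  ultimately show ?thesis by (simp add: mult_nonneg_nonpos)
qed

lemma partial_sums_cross_le:
  fixes c :: "nat \<Rightarrow> real"
  assumes c: "\<And>n. c n \<ge> 0" and v: "0 \<le> v1" "v1 \<le> v2"
  shows "(\<Sum>n<N. c n * v1^(n+1)) * (\<Sum>n<N. c n / (n+1) * v2^(n+1))
       \<le> (\<Sum>n<N. c n * v2^(n+1)) * (\<Sum>n<N. c n / (n+1) * v1^(n+1))"
proof -
  define T where
    "T j k = c j * c k * (v1^(j+1) * v2^(k+1) / real (k+1) - v2^(j+1) * v1^(k+1) / real (k+1))"
    for j k
  have diff: "(\<Sum>n<N. c n * v1^(n+1)) * (\<Sum>n<N. c n / (n+1) * v2^(n+1))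
       - (\<Sum>n<N. c n * v2^(n+1)) * (\<Sum>n<N. c n / (n+1) * v1^(n+1)) = (\<Sum>j<N. \<Sum>k<N. T j k)"
    unfolding T_def sum_product sum_subtractf[symmetric]
    by (intro sum.cong refl) (simp add: algebra_simps)
  \<comment> \<open>symmetrise the double sum: each pair \<open>T j k + T k j\<close> is nonpositive\<close>
  have "2 * (\<Sum>j<N. \<Sum>k<N. T j k) = (\<Sum>j<N. \<Sum>k<N. T j k + T k j)"
    using sum.swap[where g = T] by (simp add: sum.distrib)
  also have "\<dots> \<le> 0"
  proof (intro sum_nonpos)
    fix j k
    have "T j k + T k j
        = c j * c k * ((1 / real (k+1) - 1 / real (j+1)) * (v1^(j+1) * v2^(k+1) - v2^(j+1) * v1^(k+1)))"
      unfolding T_def by (simp add: algebra_simps)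
    thus "T j k + T k j \<le> 0"
      using power_cross_difference_nonpos[OF v, of k j] c[of j] c[of k]
      by (simp add: mult_nonneg_nonpos)
  qed
  finally show ?thesis using diff by linarith
qed

lemma power_series_cross_le:
  fixes c :: "nat \<Rightarrow> real"
  assumes "\<And>n. c n \<ge> 0" "0 \<le> x" "x \<le> y"
    and A: "\<And>t. t \<in> {x, y} \<Longrightarrow> (\<lambda>n. c n * t^(n+1)) sums A t"
    and B: "\<And>t. t \<in> {x, y} \<Longrightarrow> (\<lambda>n. c n / (n+1) * t^(n+1)) sums B t"
  shows "A x * B y \<le> A y * B x"
proof (rule LIMSEQ_le)
  show "(\<lambda>N. (\<Sum>n<N. c n * x^(n+1)) * (\<Sum>n<N. c n / (n+1) * y^(n+1))) \<longlonglongrightarrow> A x * B y"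
    "(\<lambda>N. (\<Sum>n<N. c n * y^(n+1)) * (\<Sum>n<N. c n / (n+1) * x^(n+1))) \<longlonglongrightarrow> A y * B x"
    using A B unfolding sums_def by (auto intro!: tendsto_mult)
  show "\<exists>N. \<forall>n\<ge>N. (\<Sum>k<n. c k * x^(k+1)) * (\<Sum>k<n. c k / (k+1) * y^(k+1))
      \<le> (\<Sum>k<n. c k * y^(k+1)) * (\<Sum>k<n. c k / (k+1) * x^(k+1))"
    using partial_sums_cross_le[of c x y] assms by blast
qed

definition sinh_plus_sin_coeff :: "nat \<Rightarrow> real" where
  "sinh_plus_sin_coeff n = (if even n then 0 else 1 / fact n) + sin_coeff n"

lemma sinh_plus_sin_coeff_nonneg: "sinh_plus_sin_coeff n \<ge> 0"
proof -
  have "\<bar>(- 1::real) ^ ((n - Suc 0) div 2)\<bar> = 1" by simp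
  hence "(- 1::real) ^ ((n - Suc 0) div 2) \<ge> -1" by linarith
  hence "(- 1::real) / fact n \<le> (- 1::real) ^ ((n - Suc 0) div 2) / fact n"
    by (intro divide_right_mono) auto
  thus ?thesis unfolding sinh_plus_sin_coeff_def sin_coeff_def by auto
qed

lemma sums_mult_sinh_plus_sin:
  "(\<lambda>n. sinh_plus_sin_coeff n * t^(n+1)) sums (t * (sinh t + sin t))"
proof -
  have "(\<lambda>n. (if even n then 0 else t ^ n /\<^sub>R fact n) + sin_coeff n *\<^sub>R t^n) sums (sinh t + sin t)"
    by (intro sums_add sinh_converges sin_converges)
  from sums_mult[OF this, of t] show ?thesis
    by (rule sums_cong[THEN iffD1, rotated])
       (auto simp: sinh_plus_sin_coeff_def field_simps)
qed

lemma sums_cosh_minus_cos: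
  "(\<lambda>n. sinh_plus_sin_coeff n / (n+1) * t^(n+1)) sums (cosh t - cos t)"
proof -
  have "(\<lambda>n. (if even n then t ^ n /\<^sub>R fact n else 0) - cos_coeff n *\<^sub>R t^n) sums (cosh t - cos t)"
    by (intro sums_diff cosh_converges cos_converges)
  hence "(\<lambda>n. (if even (Suc n) then t ^ (Suc n) /\<^sub>R fact (Suc n) else 0)
      - cos_coeff (Suc n) *\<^sub>R t^(Suc n)) sums (cosh t - cos t)"
    by (subst sums_Suc_iff) (simp add: cos_coeff_def)
  moreover have "(if even (Suc n) then t ^ (Suc n) /\<^sub>R fact (Suc n) else 0)
      - cos_coeff (Suc n) *\<^sub>R t^(Suc n) = sinh_plus_sin_coeff n / (n+1) * t^(n+1)" for n
  proof (cases "even n")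
    case True
    thus ?thesis by (simp add: cos_coeff_Suc sinh_plus_sin_coeff_def sin_coeff_def)
  next
    case False
    thus ?thesis
      by (simp add: cos_coeff_Suc sinh_plus_sin_coeff_def divide_simps) (simp add: algebra_simps)
  qed
  ultimately show ?thesis by simp
qed

lemma sinh_plus_sin_div_cosh_minus_cos_mono:
  assumes "0 < x" "x \<le> y"
  shows "x * (sinh x + sin x) / (cosh x - cos x) \<le> y * (sinh y + sin y) / (cosh (y::real) - cos y)"
proof -
  have "x * (sinh x + sin x) * (cosh y - cos y) \<le> y * (sinh y + sin y) * (cosh x - cos x)"
    by (rule power_series_cross_le[OF sinh_plus_sin_coeff_nonneg _ _
          sums_mult_sinh_plus_sin sums_cosh_minus_cos]) (use assms in auto)
  moreover have "cosh x - cos x > 0" "cosh y - cos y > 0"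
    using cosh_minus_cos_gt_square[of x] cosh_minus_cos_gt_square[of y] assms
    by (smt (verit) zero_le_power2)+
  ultimately show ?thesis by (simp add: divide_simps)
qed

section \<open>The modified Bessel functions \<open>I\<^sub>m\<close>\<close>

definition I0_term :: "real \<Rightarrow> nat \<Rightarrow> real" where
  "I0_term x n = (x / 2) ^ (2 * n) / (fact n)\<^sup>2"

definition bessel_I0 :: "real \<Rightarrow> real" where
  "bessel_I0 x = (\<Sum>n. I0_term x n)"

lemma I0_term_nonneg: "I0_term x n \<ge> 0"
  unfolding I0_term_def by (simp add: power_mult)

lemma summable_I0_term: "summable (I0_term x)"
proof (rule summable_comparison_test[OF _ summable_exp[of "(x / 2)\<^sup>2"]])
  show "\<exists>N. \<forall>n\<ge>N. norm (I0_term x n) \<le> inverse (fact n) * ((x / 2)\<^sup>2) ^ n"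
  proof (intro exI allI impI)
    fix n :: nat
    have "I0_term x n = ((x / 2)\<^sup>2) ^ n / (fact n * fact n)"
      unfolding I0_term_def by (simp add: power_mult power2_eq_square)
    also have "\<dots> \<le> ((x / 2)\<^sup>2) ^ n / fact n"
      by (intro divide_left_mono) (auto simp: power_mult)
    finally show "norm (I0_term x n) \<le> inverse (fact n) * ((x / 2)\<^sup>2) ^ n"
      using I0_term_nonneg[of x n] by (simp add: field_simps)
  qed
qed

lemma besselI_0_of_real: "besselI 0 (of_real x) = of_real (bessel_I0 x)"
proof -
  have "of_real (bessel_I0 x) = (\<Sum>n. complex_of_real (I0_term x n))"
    unfolding bessel_I0_def by (rule suminf_of_real[OF summable_I0_term])
  thus ?thesis
    unfolding besselI_def I0_term_def by (simp add: power_divide power_mult power2_eq_square)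
qed

lemma suminf_I0_term_shift_le: "(\<Sum>k. I0_term x (k + j)) \<le> bessel_I0 x"
proof -
  have "(\<Sum>k. I0_term x (k + j)) = bessel_I0 x - (\<Sum>i<j. I0_term x i)"
    unfolding bessel_I0_def by (rule suminf_minus_initial_segment[OF summable_I0_term])
  moreover have "(\<Sum>i<j. I0_term x i) \<ge> 0" by (intro sum_nonneg I0_term_nonneg)
  ultimately show ?thesis by linarith
qed

lemma fact_add_mult_le:
  assumes "i \<le> j"
  shows "fact (i + d) * fact j \<le> (fact i * fact (j + d) :: nat)"
proof (induction d)
  case 0 thus ?case by simp
next
  case (Suc d)
  have "fact (i + Suc d) * fact j = (i + d + 1) * (fact (i + d) * fact j)"
    by (simp add: algebra_simps)
  also have "\<dots> \<le> (i + d + 1) * (fact i * fact (j + d))"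
    using Suc.IH by (intro mult_left_mono) auto
  also have "\<dots> \<le> (j + d + 1) * (fact i * fact (j + d))"
    using assms by (intro mult_right_mono) auto
  also have "\<dots> = fact i * fact (j + Suc d)"
    by (simp add: algebra_simps)
  finally show ?case .
qed

text \<open>
  Splitting \<open>2k + m = a + b\<close> with \<open>a = k + \<lfloor>m/2\<rfloor>\<close>, \<open>b = k + \<lceil>m/2\<rceil>\<close>, the \<open>k\<close>-th term of
  \<open>I\<^sub>m(z)\<close> is at most \<open>(q\<^sup>a/a!) (q\<^sup>b/b!)\<close> with \<open>q = |z|/2\<close>, and AM-GM bounds this by the mean
  of two terms of the series of \<open>I\<^sub>0(|z|)\<close>.
\<close>
lemma norm_besselI_term_le:
  fixes z :: complex
  shows "norm ((z / 2) ^ (2 * k + m) / of_nat (fact k * fact (k + m)))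
     \<le> (I0_term (norm z) (k + m div 2) + I0_term (norm z) (k + (m - m div 2))) / 2"
proof -
  define a where "a = k + m div 2"
  define b where "b = k + (m - m div 2)"
  define q where "q = norm z / 2"
  have ab: "a + b = 2 * k + m" unfolding a_def b_def by simp
  have "fact a * fact b \<le> (fact k * fact (k + m) :: nat)"
    using fact_add_mult_le[of k "k + (m - m div 2)" "m div 2"] unfolding a_def b_def
    by (simp add: add.assoc)
  hence fact_le: "real (fact a * fact b) \<le> real (fact k * fact (k + m))" by linarith
  have "norm ((z / 2) ^ (2 * k + m) / of_nat (fact k * fact (k + m)))
      = q ^ (a + b) / real (fact k * fact (k + m))"
    unfolding q_def ab norm_divide norm_of_nat norm_power by simp
  also have "\<dots> \<le> q ^ (a + b) / real (fact a * fact b)"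
    using fact_le unfolding q_def by (intro divide_left_mono) auto
  also have "\<dots> = (q^a / fact a) * (q^b / fact b)"
    by (simp add: power_add)
  also have "\<dots> \<le> ((q^a / fact a)\<^sup>2 + (q^b / fact b)\<^sup>2) / 2"
    using sum_squares_bound[of "q^a / fact a" "q^b / fact b"] by (simp add: mult_ac)
  also have "\<dots> = (I0_term (norm z) a + I0_term (norm z) b) / 2"
    unfolding I0_term_def q_def
    by (simp add: power_divide power_mult power2_eq_square[symmetric] mult.commute
        power_mult_distrib)
  finally show ?thesis unfolding a_def b_def .
qed

lemma norm_besselI_le: "norm (besselI m z) \<le> bessel_I0 (norm z)"
proof -
  let ?t = "\<lambda>k. (z / 2) ^ (2 * k + m) / of_nat (fact k * fact (k + m))"
  let ?f = "\<lambda>k. I0_term (norm z) (k + m div 2)" and ?g = "\<lambda>k. I0_term (norm z) (k + (m - m div 2))"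
  have sums: "summable ?f" "summable ?g"
    using summable_I0_term summable_ignore_initial_segment by blast+
  have "norm (besselI m z) \<le> (\<Sum>k. (?f k + ?g k) / 2)"
    unfolding besselI_def
    by (rule norm_suminf_le[OF norm_besselI_term_le]) (intro summable_divide summable_add sums)
  also have "\<dots> = ((\<Sum>k. ?f k) + (\<Sum>k. ?g k)) / 2"
    using suminf_divide[OF summable_add[OF sums]] suminf_add[OF sums] by simp
  also have "\<dots> \<le> bessel_I0 (norm z)"
    using suminf_I0_term_shift_le[of "norm z" "m div 2"]
      suminf_I0_term_shift_le[of "norm z" "m - m div 2"] by simp
  finally show ?thesis .
qed

lemma bessel_I0_mono:
  assumes "0 \<le> x" "x \<le> y" shows "bessel_I0 x \<le> bessel_I0 y"
  unfolding bessel_I0_def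
proof (rule suminf_le[OF _ summable_I0_term summable_I0_term])
  show "I0_term x n \<le> I0_term y n" for n
    unfolding I0_term_def using assms by (intro divide_right_mono power_mono) auto
qed

lemma one_le_bessel_I0: "1 \<le> bessel_I0 x"
proof -
  have "(\<Sum>n<1. I0_term x n) \<le> bessel_I0 x"
    unfolding bessel_I0_def by (rule sum_le_suminf[OF summable_I0_term]) (auto simp: I0_term_nonneg)
  thus ?thesis by (simp add: I0_term_def)
qed

lemma sum_power2_le_power2_sum:
  fixes a :: "nat \<Rightarrow> real"
  assumes "\<And>n. a n \<ge> 0"
  shows "(\<Sum>n<N. (a n)\<^sup>2) \<le> (\<Sum>n<N. a n)\<^sup>2"
proof (induction N)
  case 0 thus ?case by simp
next
  case (Suc N)
  have "(\<Sum>n<N. a n) \<ge> 0" using assms by (intro sum_nonneg) auto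
  hence "(\<Sum>n<N. a n)\<^sup>2 + (a N)\<^sup>2 \<le> ((\<Sum>n<N. a n) + a N)\<^sup>2"
    using assms[of N] by (simp add: power2_eq_square algebra_simps)
  thus ?case using Suc by simp
qed

text \<open>\<open>I\<^sub>0(x) = \<Sum> ((x/2)\<^sup>n / n!)\<^sup>2 \<le> (\<Sum> (x/2)\<^sup>n / n!)\<^sup>2 = e\<^sup>x\<close>.\<close>
lemma bessel_I0_le_exp:
  assumes "x \<ge> 0" shows "bessel_I0 x \<le> exp x"
  unfolding bessel_I0_def
proof (rule suminf_le_const[OF summable_I0_term])
  fix N
  let ?a = "\<lambda>n. (x / 2) ^ n / fact n"
  have sums: "?a sums exp (x / 2)"
    using exp_converges[of "x / 2"] by (simp only: real_scaleR_def divide_inverse_commute)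
  have "(\<Sum>n<N. ?a n) \<le> exp (x / 2)"
    unfolding sums_unique[OF sums]
    by (rule sum_le_suminf[OF sums_summable[OF sums]]) (use assms in auto)
  moreover have "(\<Sum>n<N. I0_term x n) = (\<Sum>n<N. (?a n)\<^sup>2)"
    unfolding I0_term_def by (simp add: power_divide power_mult mult.commute power_mult_distrib)
  moreover have "(\<Sum>n<N. (?a n)\<^sup>2) \<le> (\<Sum>n<N. ?a n)\<^sup>2"
    by (rule sum_power2_le_power2_sum) (use assms in auto)
  moreover have "(\<Sum>n<N. ?a n)\<^sup>2 \<le> (exp (x / 2))\<^sup>2"
    using assms calculation(1) by (intro power_mono sum_nonneg) auto
  moreover have "(exp (x / 2))\<^sup>2 = exp x"
    by (simp add: power2_eq_square exp_add[symmetric])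
  ultimately show "(\<Sum>n<N. I0_term x n) \<le> exp x" by linarith
qed

section \<open>Hyperbolic functions on the diagonal \<open>b (1 + \<i>)\<close>\<close>

definition diag :: "real \<Rightarrow> complex" where
  "diag b = of_real b * (1 + \<i>)"

lemma csqrt_i_mult:
  assumes "t \<ge> 0" shows "csqrt (\<i> * of_real t) = diag (sqrt (t / 2))"
  unfolding diag_def
proof (rule csqrt_unique)
  have "sqrt (t / 2) * sqrt (t / 2) = t / 2" using assms by simp
  thus "(of_real (sqrt (t / 2)) * (1 + \<i>))\<^sup>2 = \<i> * of_real t"
    by (simp add: complex_eq_iff power2_eq_square)
qed (use assms in auto)

lemma norm_diag: "b \<ge> 0 \<Longrightarrow> norm (diag b) = sqrt 2 * b"
  by (simp add: diag_def norm_mult cmod_def real_sqrt_mult)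

lemma sinh_diag: "sinh (diag b) = Complex (sinh b * cos b) (cosh b * sin b)"
  and cosh_diag: "cosh (diag b) = Complex (cosh b * cos b) (sinh b * sin b)"
proof -
  have split: "diag b = of_real b + \<i> * of_real b" unfolding diag_def by (simp add: algebra_simps)
  have real: "sinh (complex_of_real b) = of_real (sinh b)" "cosh (complex_of_real b) = of_real (cosh b)"
    by (simp_all add: sinh_field_def cosh_field_def exp_of_real[symmetric] exp_minus)
  have imag: "cosh (\<i> * complex_of_real b) = of_real (cos b)"
    "sinh (\<i> * complex_of_real b) = \<i> * of_real (sin b)"
    by (simp_all add: cosh_conv_cos sinh_conv_sin cos_of_real sin_of_real)
  show "sinh (diag b) = Complex (sinh b * cos b) (cosh b * sin b)"
    unfolding split sinh_add real imag by (simp add: complex_eq_iff)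
  show "cosh (diag b) = Complex (cosh b * cos b) (sinh b * sin b)"
    unfolding split cosh_add real imag by (simp add: complex_eq_iff)
qed

lemma norm_sinh_diag_sq: "(norm (sinh (diag b)))\<^sup>2 = (sinh b)\<^sup>2 + (sin b)\<^sup>2"
proof -
  have "(norm (sinh (diag b)))\<^sup>2 = (sinh b * cos b)\<^sup>2 + (cosh b * sin b)\<^sup>2"
    unfolding sinh_diag cmod_power2 by simp
  also have "\<dots> = (sinh b)\<^sup>2 * ((sin b)\<^sup>2 + (cos b)\<^sup>2) + ((cosh b)\<^sup>2 - (sinh b)\<^sup>2) * (sin b)\<^sup>2"
    by algebra
  finally show ?thesis by (simp only: sin_cos_squared_add hyperbolic_pythagoras)
qed

lemma sinh_sq_plus_sin_sq: "(sinh (b::real))\<^sup>2 + (sin b)\<^sup>2 = (cosh (2 * b) - cos (2 * b)) / 2"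
  unfolding cosh_double cos_double_sin using hyperbolic_pythagoras[of b]
  by (simp add: algebra_simps)

lemma Re_diag_coth:
  "Re (diag b * cosh (diag b) / sinh (diag b))
     = b * (sinh (2 * b) + sin (2 * b)) / (cosh (2 * b) - cos (2 * b))"
proof -
  have numerator: "diag b * Complex (cosh b * cos b) (sinh b * sin b)
       = Complex (b * (cosh b * cos b) - b * (sinh b * sin b)) (b * (sinh b * sin b) + b * (cosh b * cos b))"
    unfolding diag_def by (simp add: complex_eq_iff)
  have "(b * (cosh b * cos b) - b * (sinh b * sin b)) * (sinh b * cos b)
      + (b * (sinh b * sin b) + b * (cosh b * cos b)) * (cosh b * sin b)
      = b * (sinh b * cosh b * ((sin b)\<^sup>2 + (cos b)\<^sup>2) + sin b * cos b * ((cosh b)\<^sup>2 - (sinh b)\<^sup>2))"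
    by algebra
  also have "\<dots> = b * (sinh b * cosh b + sin b * cos b)"
    by (simp only: sin_cos_squared_add hyperbolic_pythagoras mult_1_right)
  also have "\<dots> = b * (sinh (2 * b) + sin (2 * b)) / 2"
    by (simp add: sinh_double sin_double)
  finally have num: "(b * (cosh b * cos b) - b * (sinh b * sin b)) * (sinh b * cos b)
      + (b * (sinh b * sin b) + b * (cosh b * cos b)) * (cosh b * sin b)
      = b * (sinh (2 * b) + sin (2 * b)) / 2" .
  have den: "(sinh b * cos b)\<^sup>2 + (cosh b * sin b)\<^sup>2 = (cosh (2 * b) - cos (2 * b)) / 2"
    using norm_sinh_diag_sq[of b] unfolding sinh_diag cmod_power2 sinh_sq_plus_sin_sq by simp
  show ?thesis
    unfolding Re_divide cosh_diag numerator sinh_diag cmod_power2 complex.sel num den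
    by (simp add: divide_simps)
qed

lemma Re_diag_coth_gt_1:
  assumes "b > 0" shows "Re (diag b * cosh (diag b) / sinh (diag b)) > 1"
proof -
  have "0 < cosh (2 * b) - cos (2 * b)"
    using cosh_minus_cos_gt_square[of "2 * b"] assms by (smt (verit) zero_le_power2)
  thus ?thesis
    unfolding Re_diag_coth using cosh_minus_cos_lt[of "2 * b"] assms by (simp add: field_simps)
qed

lemma Re_diag_coth_mono:
  assumes "0 < b" "b \<le> b'"
  shows "Re (diag b * cosh (diag b) / sinh (diag b)) \<le> Re (diag b' * cosh (diag b') / sinh (diag b'))"
  unfolding Re_diag_coth
  using sinh_plus_sin_div_cosh_minus_cos_mono[of "2 * b" "2 * b'"] assms by simp

lemma norm_diag_div_sinh_le:
  assumes "b > 0" shows "norm (diag b / sinh (diag b)) \<le> sqrt 2 * b / sinh b"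
proof -
  have "(sinh b)\<^sup>2 \<le> (norm (sinh (diag b)))\<^sup>2"
    unfolding norm_sinh_diag_sq by simp
  hence sinh_le: "sinh b \<le> norm (sinh (diag b))"
    by (rule power2_le_imp_le) simp
  have "norm (diag b / sinh (diag b)) = sqrt 2 * b / norm (sinh (diag b))"
    using assms by (simp add: norm_divide norm_diag)
  also have "\<dots> \<le> sqrt 2 * b / sinh b"
    using assms sinh_le by (intro divide_left_mono mult_pos_pos) auto
  finally show ?thesis .
qed

lemma norm_diag_div_sinh_le_1:
  assumes "b > 0" shows "norm (diag b / sinh (diag b)) \<le> 1"
proof -
  have "(sqrt 2 * b)\<^sup>2 < (norm (sinh (diag b)))\<^sup>2"
    unfolding norm_sinh_diag_sq sinh_sq_plus_sin_sq
    using cosh_minus_cos_gt_square[of "2 * b"] assms by (simp add: power_mult_distrib)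
  hence "sqrt 2 * b < norm (sinh (diag b))"
    by (rule power2_less_imp_less) simp
  with assms show ?thesis by (simp add: norm_divide norm_diag divide_le_eq)
qed

section \<open>The coefficients of the PZD density\<close>

lemma pzd_beta_pos: "\<gamma> > 0 \<Longrightarrow> \<sigma> > 0 \<Longrightarrow> L > 0 \<Longrightarrow> m > 0 \<Longrightarrow> pzd_beta \<gamma> \<sigma> L m > 0"
  unfolding pzd_beta_def by simp

lemma pzd_beta_mono:
  "\<gamma> \<ge> 0 \<Longrightarrow> \<sigma> \<ge> 0 \<Longrightarrow> L \<ge> 0 \<Longrightarrow> m \<le> n \<Longrightarrow> pzd_beta \<gamma> \<sigma> L m \<le> pzd_beta \<gamma> \<sigma> L n"
  unfolding pzd_beta_def by (intro mult_right_mono real_sqrt_le_mono divide_right_mono) auto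

lemma pzd_a_b_diag:
  fixes m :: nat
  assumes "\<gamma> > 0" "\<sigma> > 0" "L > 0"
  defines "w \<equiv> diag (pzd_beta \<gamma> \<sigma> L m)"
  shows "pzd_a \<gamma> \<sigma> L m = w * cosh w / sinh w / of_real (\<sigma>\<^sup>2 * L)"
    and "pzd_b \<gamma> \<sigma> L m = w / sinh w / of_real (\<sigma>\<^sup>2 * L)"
proof -
  have "real m * (\<gamma> * \<sigma>\<^sup>2) / 2 = (real m * \<gamma> / 2) * \<sigma>\<^sup>2" by simp
  hence "sqrt (real m * (\<gamma> * \<sigma>\<^sup>2) / 2) = sqrt (real m * \<gamma> / 2) * \<sigma>"
    using assms by (simp only: real_sqrt_mult real_sqrt_abs)
  hence "csqrt (\<i> * of_nat m * of_real (\<gamma> * \<sigma>\<^sup>2)) = diag (sqrt (real m * \<gamma> / 2) * \<sigma>)"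
    using csqrt_i_mult[of "real m * (\<gamma> * \<sigma>\<^sup>2)"] assms by (simp add: mult_ac)
  hence arg: "csqrt (\<i> * of_nat m * of_real (\<gamma> * \<sigma>\<^sup>2)) * of_real L = w"
    unfolding w_def pzd_beta_def diag_def by simp
  have "csqrt (\<i> * of_nat m * of_real \<gamma>) = diag (sqrt (real m * \<gamma> / 2))"
    using csqrt_i_mult[of "real m * \<gamma>"] assms by (simp add: mult_ac)
  hence factor: "csqrt (\<i> * of_nat m * of_real \<gamma>) / of_real \<sigma> = w / of_real (\<sigma>\<^sup>2 * L)"
    unfolding w_def pzd_beta_def diag_def using assms by (simp add: field_simps power2_eq_square)
  show "pzd_a \<gamma> \<sigma> L m = w * cosh w / sinh w / of_real (\<sigma>\<^sup>2 * L)"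
    unfolding pzd_a_def ccoth_def arg factor by (simp add: field_simps)
  show "pzd_b \<gamma> \<sigma> L m = w / sinh w / of_real (\<sigma>\<^sup>2 * L)"
    unfolding pzd_b_def arg factor by (simp add: field_simps)
qed

lemma Re_pzd_a:
  assumes "\<gamma> > 0" "\<sigma> > 0" "L > 0"
  shows "Re (pzd_a \<gamma> \<sigma> L m)
    = Re (diag (pzd_beta \<gamma> \<sigma> L m) * cosh (diag (pzd_beta \<gamma> \<sigma> L m))
        / sinh (diag (pzd_beta \<gamma> \<sigma> L m))) / (\<sigma>\<^sup>2 * L)"
  unfolding pzd_a_b_diag(1)[OF assms] by (simp only: Re_divide_of_real)

lemma Re_pzd_a_gt:
  assumes "\<gamma> > 0" "\<sigma> > 0" "L > 0" "m > 0"
  shows "1 / (\<sigma>\<^sup>2 * L) < Re (pzd_a \<gamma> \<sigma> L m)"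
  unfolding Re_pzd_a[OF assms(1-3)]
  using Re_diag_coth_gt_1[OF pzd_beta_pos[OF assms]] assms(2,3) by (simp add: divide_strict_right_mono)

lemma Re_pzd_a_mono:
  assumes "\<gamma> > 0" "\<sigma> > 0" "L > 0" "0 < m" "m \<le> n"
  shows "Re (pzd_a \<gamma> \<sigma> L m) \<le> Re (pzd_a \<gamma> \<sigma> L n)"
  unfolding Re_pzd_a[OF assms(1-3)]
  using Re_diag_coth_mono[OF pzd_beta_pos[OF assms(1-4)] pzd_beta_mono[of \<gamma> \<sigma> L m n]] assms
  by (simp add: divide_right_mono)

lemma norm_pzd_b:
  assumes "\<gamma> > 0" "\<sigma> > 0" "L > 0"
  shows "norm (pzd_b \<gamma> \<sigma> L m)
    = norm (diag (pzd_beta \<gamma> \<sigma> L m) / sinh (diag (pzd_beta \<gamma> \<sigma> L m))) / (\<sigma>\<^sup>2 * L)"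
  unfolding pzd_a_b_diag(2)[OF assms] using assms by (simp add: norm_divide norm_mult norm_power)

lemma pzd_pR_eq:
  "pzd_pR \<sigma> L r r0
    = 2 * r / (\<sigma>\<^sup>2 * L) * exp (- (r\<^sup>2 + r0\<^sup>2) / (\<sigma>\<^sup>2 * L)) * bessel_I0 (2 * r * r0 / (\<sigma>\<^sup>2 * L))"
  unfolding pzd_pR_def besselI_0_of_real by simp

lemma pzd_pR_nonneg: "\<sigma> > 0 \<Longrightarrow> L > 0 \<Longrightarrow> r \<ge> 0 \<Longrightarrow> pzd_pR \<sigma> L r r0 \<ge> 0"
  unfolding pzd_pR_eq using one_le_bessel_I0
  by (intro mult_nonneg_nonneg) (auto intro: order_trans[OF zero_le_one])

lemma pzd_pR_pos: "\<sigma> > 0 \<Longrightarrow> L > 0 \<Longrightarrow> r > 0 \<Longrightarrow> pzd_pR \<sigma> L r r0 > 0"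
  unfolding pzd_pR_eq using one_le_bessel_I0
  by (intro mult_pos_pos) (auto intro: less_le_trans[OF zero_less_one])

lemma pzd_pR_le:
  assumes "\<sigma> > 0" "L > 0" "r \<ge> 0" "r0 \<ge> 0"
  shows "pzd_pR \<sigma> L r r0 \<le> 2 * r / (\<sigma>\<^sup>2 * L) * exp (- (r - r0)\<^sup>2 / (\<sigma>\<^sup>2 * L))"
proof -
  define c where "c = \<sigma>\<^sup>2 * L"
  have "c > 0" unfolding c_def using assms by simp
  have "pzd_pR \<sigma> L r r0 \<le> 2 * r / c * exp (- (r\<^sup>2 + r0\<^sup>2) / c) * exp (2 * r * r0 / c)"
    unfolding pzd_pR_eq c_def[symmetric]
    using assms \<open>c > 0\<close> bessel_I0_le_exp[of "2 * r * r0 / c"] by (intro mult_left_mono) auto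
  also have "exp (- (r\<^sup>2 + r0\<^sup>2) / c) * exp (2 * r * r0 / c) = exp (- (r - r0)\<^sup>2 / c)"
    unfolding exp_add[symmetric] using \<open>c > 0\<close> by (simp add: power2_diff field_simps)
  hence "2 * r / c * exp (- (r\<^sup>2 + r0\<^sup>2) / c) * exp (2 * r * r0 / c) = 2 * r / c * exp (- (r - r0)\<^sup>2 / c)"
    by (simp only: mult.assoc)
  finally show ?thesis unfolding c_def .
qed

text \<open>Here \<open>|b\<^sub>m| \<le> 1/(\<sigma>\<^sup>2 L)\<close> lets the Bessel factor of \<open>C\<^sub>m\<close> be absorbed into \<open>p\<^sub>R\<^sub>|\<^sub>R\<^sub>0\<close>.\<close>
lemma norm_pzd_C_le:
  assumes "\<gamma> > 0" "\<sigma> > 0" "L > 0" "m > 0" "r \<ge> 0" "r0 \<ge> 0"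
  shows "norm (pzd_C \<gamma> \<sigma> L m r r0)
    \<le> \<sigma>\<^sup>2 * L * norm (pzd_b \<gamma> \<sigma> L m) / 2
       * exp (- (Re (pzd_a \<gamma> \<sigma> L m) - 1 / (\<sigma>\<^sup>2 * L)) * (r\<^sup>2 + r0\<^sup>2)) * pzd_pR \<sigma> L r r0"
proof -
  define c where "c = \<sigma>\<^sup>2 * L"
  define nb where "nb = norm (pzd_b \<gamma> \<sigma> L m)"
  define s where "s = r\<^sup>2 + r0\<^sup>2"
  have c: "c > 0" unfolding c_def using assms by simp
  have nb: "0 \<le> nb" "c * nb \<le> 1"
    unfolding nb_def c_def norm_pzd_b[OF assms(1-3)]
    using norm_diag_div_sinh_le_1[OF pzd_beta_pos[OF assms(1-4)]] assms(2,3) by auto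
  have "norm (2 * pzd_b \<gamma> \<sigma> L m * of_real (r0 * r)) = 2 * nb * (r0 * r)"
    using assms(5,6) unfolding nb_def by (simp add: norm_mult)
  hence "norm (besselI m (2 * pzd_b \<gamma> \<sigma> L m * of_real (r0 * r))) \<le> bessel_I0 (2 * nb * (r0 * r))"
    using norm_besselI_le by metis
  also have "\<dots> \<le> bessel_I0 (2 * r * r0 / c)"
  proof (rule bessel_I0_mono)
    have "nb \<le> 1 / c" using nb c by (simp add: field_simps)
    thus "2 * nb * (r0 * r) \<le> 2 * r * r0 / c"
      using assms(5,6) mult_right_mono[of nb "1 / c" "2 * r * r0"] by (simp add: mult_ac)
  qed (use nb assms(5,6) in simp)
  finally have bessel: "norm (besselI m (2 * pzd_b \<gamma> \<sigma> L m * of_real (r0 * r)))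
      \<le> bessel_I0 (2 * r * r0 / c)" .
  have "norm (pzd_C \<gamma> \<sigma> L m r r0)
      = r * nb * exp (- Re (pzd_a \<gamma> \<sigma> L m) * s) * norm (besselI m (2 * pzd_b \<gamma> \<sigma> L m * of_real (r0 * r)))"
    unfolding pzd_C_def nb_def s_def using assms(5) by (simp add: norm_mult)
  also have "\<dots> \<le> r * nb * exp (- Re (pzd_a \<gamma> \<sigma> L m) * s) * bessel_I0 (2 * r * r0 / c)"
    using bessel nb assms(5) by (intro mult_left_mono) auto
  also have "\<dots> = c * nb / 2 * exp (- (Re (pzd_a \<gamma> \<sigma> L m) - 1 / c) * s)
      * (2 * r / c * exp (- s / c) * bessel_I0 (2 * r * r0 / c))"
    using c by (simp add: field_simps exp_add[symmetric] exp_diff)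
  finally show ?thesis
    unfolding pzd_pR_eq c_def nb_def s_def .
qed

abbreviation pzd_ratio :: "real \<Rightarrow> real \<Rightarrow> real \<Rightarrow> nat \<Rightarrow> real" where
  "pzd_ratio \<gamma> \<sigma> L n \<equiv> pzd_beta \<gamma> \<sigma> L (Suc n) / sinh (pzd_beta \<gamma> \<sigma> L (Suc n))"

abbreviation pzd_decay :: "real \<Rightarrow> real \<Rightarrow> real \<Rightarrow> real" where
  "pzd_decay \<gamma> \<sigma> L \<equiv> Re (pzd_a \<gamma> \<sigma> L 1) - 1 / (\<sigma>\<^sup>2 * L)"

lemma pzd_decay_pos: "\<gamma> > 0 \<Longrightarrow> \<sigma> > 0 \<Longrightarrow> L > 0 \<Longrightarrow> pzd_decay \<gamma> \<sigma> L > 0"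
  using Re_pzd_a_gt[of \<gamma> \<sigma> L 1] by simp

lemma norm_pzd_C_Suc_le:
  assumes "\<gamma> > 0" "\<sigma> > 0" "L > 0" "r \<ge> 0" "r0 \<ge> 0"
  shows "norm (pzd_C \<gamma> \<sigma> L (Suc n) r r0)
    \<le> pzd_ratio \<gamma> \<sigma> L n * (sqrt 2 / 2 * exp (- pzd_decay \<gamma> \<sigma> L * (r\<^sup>2 + r0\<^sup>2)) * pzd_pR \<sigma> L r r0)"
proof -
  define s where "s = r\<^sup>2 + r0\<^sup>2"
  define nb where "nb = \<sigma>\<^sup>2 * L * norm (pzd_b \<gamma> \<sigma> L (Suc n))"
  have "nb = norm (diag (pzd_beta \<gamma> \<sigma> L (Suc n)) / sinh (diag (pzd_beta \<gamma> \<sigma> L (Suc n))))"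
    unfolding nb_def norm_pzd_b[OF assms(1-3)] using assms(2,3) by simp
  also have "\<dots> \<le> sqrt 2 * pzd_ratio \<gamma> \<sigma> L n"
    using norm_diag_div_sinh_le[OF pzd_beta_pos[OF assms(1-3) zero_less_Suc]] by simp
  finally have nb_le: "nb \<le> sqrt 2 * pzd_ratio \<gamma> \<sigma> L n" .
  have "nb \<ge> 0" unfolding nb_def using assms by simp
  have exp_le: "exp (- (Re (pzd_a \<gamma> \<sigma> L (Suc n)) - 1 / (\<sigma>\<^sup>2 * L)) * s) \<le> exp (- pzd_decay \<gamma> \<sigma> L * s)"
    using Re_pzd_a_mono[OF assms(1-3), of 1 "Suc n"] by (simp add: s_def mult_right_mono)
  have "norm (pzd_C \<gamma> \<sigma> L (Suc n) r r0)
      \<le> nb / 2 * exp (- (Re (pzd_a \<gamma> \<sigma> L (Suc n)) - 1 / (\<sigma>\<^sup>2 * L)) * s) * pzd_pR \<sigma> L r r0"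
    unfolding nb_def s_def by (rule norm_pzd_C_le[OF assms(1-3) zero_less_Suc assms(4,5)])
  also have "\<dots> = (nb * exp (- (Re (pzd_a \<gamma> \<sigma> L (Suc n)) - 1 / (\<sigma>\<^sup>2 * L)) * s)) * (pzd_pR \<sigma> L r r0 / 2)"
    by simp
  also have "\<dots> \<le> (sqrt 2 * pzd_ratio \<gamma> \<sigma> L n * exp (- pzd_decay \<gamma> \<sigma> L * s)) * (pzd_pR \<sigma> L r r0 / 2)"
    using nb_le exp_le \<open>nb \<ge> 0\<close> pzd_pR_nonneg[OF assms(2,3,4)]
    by (intro mult_right_mono mult_mono) auto
  finally show ?thesis unfolding s_def by (simp add: mult_ac)
qed

lemma summable_sqrt_div_sinh_sqrt:
  fixes k :: real
  assumes "k > 0"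
  shows "summable (\<lambda>n. sqrt (k * real (Suc n)) / sinh (sqrt (k * real (Suc n))))"
proof (rule summable_comparison_test)
  have "summable (\<lambda>n. inverse (real (Suc n) ^ 2))"
    using inverse_power_summable[of 2, where 'a = real] by (subst summable_Suc_iff) simp
  thus "summable (\<lambda>n. 120 / k\<^sup>2 * inverse (real (Suc n) ^ 2))"
    by (rule summable_mult)
  show "\<exists>N. \<forall>n\<ge>N. norm (sqrt (k * real (Suc n)) / sinh (sqrt (k * real (Suc n)))) \<le> 120 / k\<^sup>2 * inverse (real (Suc n) ^ 2)"
  proof (intro exI allI impI)
    fix n :: nat
    define x where "x = sqrt (k * real (Suc n))"
    have "x > 0" unfolding x_def using assms by (intro real_sqrt_gt_zero mult_pos_pos) auto
    have "norm (x / sinh x) = x / sinh x" using \<open>x > 0\<close> by simp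
    also have "\<dots> \<le> x / (x ^ 5 / 120)"
      using \<open>x > 0\<close> sinh_ge_pow5[of x] by (intro divide_left_mono) auto
    also have "\<dots> = 120 / (x\<^sup>2)\<^sup>2" using \<open>x > 0\<close> by (simp add: field_simps eval_nat_numeral)
    also have "\<dots> = 120 / k\<^sup>2 * inverse (real (Suc n) ^ 2)"
      unfolding x_def using assms by (simp del: of_nat_Suc add: power_mult_distrib field_simps)
    finally show "norm (sqrt (k * real (Suc n)) / sinh (sqrt (k * real (Suc n)))) \<le> 120 / k\<^sup>2 * inverse (real (Suc n) ^ 2)"
      unfolding x_def .
  qed
qed

lemma summable_pzd_ratio:
  assumes "\<gamma> > 0" "\<sigma> > 0" "L > 0"
  shows "summable (pzd_ratio \<gamma> \<sigma> L)"
proof -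
  have "pzd_beta \<gamma> \<sigma> L (Suc n) = sqrt (\<gamma> * \<sigma>\<^sup>2 * L\<^sup>2 / 2 * real (Suc n))" for n
  proof -
    have "\<gamma> * \<sigma>\<^sup>2 * L\<^sup>2 / 2 * real (Suc n) = (real (Suc n) * \<gamma> / 2) * (\<sigma> * L)\<^sup>2"
      by (simp add: power_mult_distrib)
    thus ?thesis
      unfolding pzd_beta_def using assms by (simp only: real_sqrt_mult real_sqrt_abs) simp
  qed
  thus ?thesis
    using summable_sqrt_div_sinh_sqrt[of "\<gamma> * \<sigma>\<^sup>2 * L\<^sup>2 / 2"] assms by simp
qed

section \<open>Bounds on the PZD density\<close>

lemma pzd_phase_series_bound:
  assumes "\<gamma> > 0" "\<sigma> > 0" "L > 0" "r \<ge> 0" "r0 \<ge> 0"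
  shows "\<bar>\<Sum>n. Re (pzd_C \<gamma> \<sigma> L (Suc n) r r0 * exp (\<i> * of_nat (Suc n) * of_real \<theta>))\<bar>
    \<le> (\<Sum>n. pzd_ratio \<gamma> \<sigma> L n) * (sqrt 2 / 2 * exp (- pzd_decay \<gamma> \<sigma> L * (r\<^sup>2 + r0\<^sup>2)) * pzd_pR \<sigma> L r r0)"
proof -
  define K where "K = sqrt 2 / 2 * exp (- pzd_decay \<gamma> \<sigma> L * (r\<^sup>2 + r0\<^sup>2)) * pzd_pR \<sigma> L r r0"
  have term_le: "norm (Re (pzd_C \<gamma> \<sigma> L (Suc n) r r0 * exp (\<i> * of_nat (Suc n) * of_real \<theta>)))
      \<le> pzd_ratio \<gamma> \<sigma> L n * K" for n
  proof -
    have "\<bar>Re (pzd_C \<gamma> \<sigma> L (Suc n) r r0 * exp (\<i> * of_nat (Suc n) * of_real \<theta>))\<bar>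
        \<le> norm (pzd_C \<gamma> \<sigma> L (Suc n) r r0 * exp (\<i> * of_nat (Suc n) * of_real \<theta>))"
      by (rule abs_Re_le_cmod)
    also have "\<dots> = norm (pzd_C \<gamma> \<sigma> L (Suc n) r r0)" by (simp add: norm_mult)
    finally show ?thesis
      unfolding K_def real_norm_def using norm_pzd_C_Suc_le[OF assms, of n] by (rule order_trans)
  qed
  have "summable (\<lambda>n. pzd_ratio \<gamma> \<sigma> L n * K)"
    by (rule summable_mult2[OF summable_pzd_ratio[OF assms(1-3)]])
  from norm_suminf_le[OF term_le this] show ?thesis
    unfolding K_def suminf_mult2[OF summable_pzd_ratio[OF assms(1-3)], symmetric] by simp
qed

lemma suminf_pzd_ratio_pos:
  assumes "\<gamma> > 0" "\<sigma> > 0" "L > 0"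
  shows "(\<Sum>n. pzd_ratio \<gamma> \<sigma> L n) > 0"
proof -
  have "pzd_ratio \<gamma> \<sigma> L n > 0" for n
    using pzd_beta_pos[OF assms zero_less_Suc] by simp
  thus ?thesis
    using suminf_pos[OF summable_pzd_ratio[OF assms]] by blast
qed

lemma pzd_p_less:
  assumes "\<gamma> > 0" "\<sigma> > 0" "L > 0" "r > 0" "r0 \<ge> 0"
  shows "pzd_p \<gamma> \<sigma> L r \<phi> r0 \<phi>0 < pzd_ku \<gamma> \<sigma> L * pzd_pR \<sigma> L r r0"
proof -
  define S where "S = (\<Sum>n. pzd_ratio \<gamma> \<sigma> L n)"
  define P where "P = pzd_pR \<sigma> L r r0"
  define e where "e = exp (- pzd_decay \<gamma> \<sigma> L * (r\<^sup>2 + r0\<^sup>2))"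
  define \<Sigma> where "\<Sigma> = (\<Sum>n. Re (pzd_C \<gamma> \<sigma> L (Suc n) r r0
      * exp (\<i> * of_nat (Suc n) * of_real (\<phi> - \<phi>0 - \<gamma> * r0\<^sup>2 * L))))"
  have bound: "\<bar>\<Sigma>\<bar> \<le> S * (sqrt 2 / 2 * e * P)"
    unfolding \<Sigma>_def S_def P_def e_def
    by (rule pzd_phase_series_bound[OF assms(1-3) less_imp_le[OF assms(4)] assms(5)])
  have "0 < pzd_decay \<gamma> \<sigma> L * (r\<^sup>2 + r0\<^sup>2)"
    using pzd_decay_pos[OF assms(1-3)] assms(4) by (intro mult_pos_pos add_pos_nonneg) auto
  hence "e < 1" unfolding e_def by (simp only: exp_less_one_iff mult_minus_left neg_less_0_iff_less)
  have "S * P > 0"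
    unfolding S_def P_def using suminf_pzd_ratio_pos[OF assms(1-3)] pzd_pR_pos[OF assms(2-4)] by simp
  have "S * (sqrt 2 / 2 * e * P) = sqrt 2 / 2 * (S * P) * e" by (simp add: mult_ac)
  also have "\<dots> < sqrt 2 / 2 * (S * P) * 1"
    using \<open>e < 1\<close> \<open>S * P > 0\<close> by (intro mult_strict_left_mono) auto
  finally have "\<Sigma> < sqrt 2 / 2 * (S * P)" using bound by linarith
  hence "1 / pi * \<Sigma> < 1 / pi * (sqrt 2 / 2 * (S * P))"
    by (intro mult_strict_left_mono) auto
  moreover have "1 / (2 * pi) * (1 + sqrt 2 * S) * P = 1 / (2 * pi) * P + 1 / pi * (sqrt 2 / 2 * (S * P))"
    by (simp add: field_simps)
  ultimately show ?thesis
    unfolding pzd_p_def pzd_ku_def \<Sigma>_def[symmetric] S_def[symmetric] P_def[symmetric] by linarith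
qed

lemma pzd_p_ge:
  assumes "\<gamma> > 0" "\<sigma> > 0" "L > 0" "r \<ge> 0" "r0 \<ge> 0"
  shows "pzd_p \<gamma> \<sigma> L r \<phi> r0 \<phi>0 \<ge> 1 / (2 * pi) * pzd_pR \<sigma> L r r0 * (1 - pzd_xi \<gamma> \<sigma> L r0)"
proof -
  define S where "S = (\<Sum>n. pzd_ratio \<gamma> \<sigma> L n)"
  define P where "P = pzd_pR \<sigma> L r r0"
  define E where "E = exp (- pzd_decay \<gamma> \<sigma> L * r0\<^sup>2)"
  define \<Sigma> where "\<Sigma> = (\<Sum>n. Re (pzd_C \<gamma> \<sigma> L (Suc n) r r0
      * exp (\<i> * of_nat (Suc n) * of_real (\<phi> - \<phi>0 - \<gamma> * r0\<^sup>2 * L))))"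
  have "\<bar>\<Sigma>\<bar> \<le> S * (sqrt 2 / 2 * exp (- pzd_decay \<gamma> \<sigma> L * (r\<^sup>2 + r0\<^sup>2)) * P)"
    unfolding \<Sigma>_def S_def P_def by (rule pzd_phase_series_bound[OF assms])
  also have "\<dots> \<le> S * (sqrt 2 / 2 * E * P)"
  proof -
    have "exp (- pzd_decay \<gamma> \<sigma> L * (r\<^sup>2 + r0\<^sup>2)) \<le> E"
      unfolding E_def using pzd_decay_pos[OF assms(1-3)] by (simp add: mult_left_mono)
    thus ?thesis
      unfolding S_def P_def using suminf_pzd_ratio_pos[OF assms(1-3)] pzd_pR_nonneg[OF assms(2-4)]
      by (intro mult_left_mono mult_right_mono) auto
  qed
  finally have "- (sqrt 2 / 2 * S * E * P) \<le> \<Sigma>" by (simp add: mult_ac)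
  hence "1 / pi * (- (sqrt 2 / 2 * S * E * P)) \<le> 1 / pi * \<Sigma>"
    by (intro mult_left_mono) auto
  moreover have xi: "pzd_xi \<gamma> \<sigma> L r0 = sqrt 2 * E * S"
    unfolding pzd_xi_def E_def S_def by simp
  moreover have "1 / (2 * pi) * P * (1 - sqrt 2 * E * S)
      = 1 / (2 * pi) * P + 1 / pi * (- (sqrt 2 / 2 * S * E * P))"
    by (simp add: field_simps)
  ultimately show ?thesis
    unfolding pzd_p_def \<Sigma>_def[symmetric] P_def[symmetric] xi by linarith
qed

lemma pzd_xi_tendsto_0:
  assumes "\<gamma> > 0" "\<sigma> > 0" "L > 0"
  shows "(pzd_xi \<gamma> \<sigma> L \<longlongrightarrow> 0) at_top"
proof -
  define \<delta> where "\<delta> = pzd_decay \<gamma> \<sigma> L"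
  define S where "S = (\<Sum>n. pzd_ratio \<gamma> \<sigma> L n)"
  have "\<delta> > 0" unfolding \<delta>_def using pzd_decay_pos[OF assms] .
  hence "((\<lambda>x::real. sqrt 2 * exp (- \<delta> * x\<^sup>2) * S) \<longlongrightarrow> 0) at_top"
    by real_asymp
  moreover have "pzd_xi \<gamma> \<sigma> L = (\<lambda>x. sqrt 2 * exp (- \<delta> * x\<^sup>2) * S)"
    unfolding pzd_xi_def \<delta>_def S_def ..
  ultimately show ?thesis by simp
qed

theorem mainTheorem7:
  fixes \<gamma> \<sigma> L :: real
  assumes "\<gamma> > 0" and "\<sigma> > 0" and "L > 0"
  shows "summable (\<lambda>n. pzd_beta \<gamma> \<sigma> L (Suc n) / sinh (pzd_beta \<gamma> \<sigma> L (Suc n)))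
    \<and> (\<forall>r r0 \<phi> \<phi>0. r > 0 \<longrightarrow> r0 \<ge> 0 \<longrightarrow> \<phi> \<in> {0..<2*pi} \<longrightarrow> \<phi>0 \<in> {0..<2*pi} \<longrightarrow>
         pzd_p \<gamma> \<sigma> L r \<phi> r0 \<phi>0 < pzd_ku \<gamma> \<sigma> L * pzd_pR \<sigma> L r r0)
    \<and> (\<forall>r r0. r \<ge> 0 \<longrightarrow> r0 \<ge> 0 \<longrightarrow>
         pzd_pR \<sigma> L r r0 \<le> 2 * r / (\<sigma>\<^sup>2 * L) * exp (- (r - r0)\<^sup>2 / (\<sigma>\<^sup>2 * L))
       \<and> 2 * r / (\<sigma>\<^sup>2 * L) * exp (- (r - r0)\<^sup>2 / (\<sigma>\<^sup>2 * L)) \<le> 2 * r / (\<sigma>\<^sup>2 * L))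
    \<and> (\<forall>r r0 \<phi> \<phi>0. r \<ge> 0 \<longrightarrow> r0 \<ge> 0 \<longrightarrow>
         pzd_p \<gamma> \<sigma> L r \<phi> r0 \<phi>0 \<ge> 1 / (2 * pi) * pzd_pR \<sigma> L r r0 * (1 - pzd_xi \<gamma> \<sigma> L r0))
    \<and> (pzd_xi \<gamma> \<sigma> L \<longlongrightarrow> 0) at_top"
proof (intro conjI allI impI)
  show "summable (\<lambda>n. pzd_beta \<gamma> \<sigma> L (Suc n) / sinh (pzd_beta \<gamma> \<sigma> L (Suc n)))"
    by (rule summable_pzd_ratio[OF assms])
  show "pzd_p \<gamma> \<sigma> L r \<phi> r0 \<phi>0 < pzd_ku \<gamma> \<sigma> L * pzd_pR \<sigma> L r r0"
    if "r > 0" "r0 \<ge> 0" for r r0 \<phi> \<phi>0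
    by (rule pzd_p_less[OF assms that])
  show "pzd_pR \<sigma> L r r0 \<le> 2 * r / (\<sigma>\<^sup>2 * L) * exp (- (r - r0)\<^sup>2 / (\<sigma>\<^sup>2 * L))"
    if "r \<ge> 0" "r0 \<ge> 0" for r r0
    by (rule pzd_pR_le[OF assms(2,3) that])
  show "2 * r / (\<sigma>\<^sup>2 * L) * exp (- (r - r0)\<^sup>2 / (\<sigma>\<^sup>2 * L)) \<le> 2 * r / (\<sigma>\<^sup>2 * L)"
    if "r \<ge> 0" for r r0
    by (rule mult_left_le) (use assms that in simp_all)
  show "pzd_p \<gamma> \<sigma> L r \<phi> r0 \<phi>0 \<ge> 1 / (2 * pi) * pzd_pR \<sigma> L r r0 * (1 - pzd_xi \<gamma> \<sigma> L r0)"
    if "r \<ge> 0" "r0 \<ge> 0" for r r0 \<phi> \<phi>0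
    by (rule pzd_p_ge[OF assms that])
  show "(pzd_xi \<gamma> \<sigma> L \<longlongrightarrow> 0) at_top"
    by (rule pzd_xi_tendsto_0[OF assms])
qed

end
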